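(* Let $|\psi\rangle$ be a single-mode state of coherent rank $k$. Then for small real $\epsilon$, $$\hat a^\dagger|\psi\rangle=\frac1\epsilon(\mathbb I\otimes\langle0|)\,\hat B(2\epsilon,0)\,|\psi,1\rangle+O(\epsilon^2),$$ where the second mode is an auxiliary mode prepared in the Fock state $|1\rangle$ and projected onto the vacuum $|0\rangle$. Consequently $\hat a^\dagger$ can be implemented on $|\psi\rangle$ to arbitrary accuracy, the result having approximate coherent rank $2k$.
   Context: Two modes with annihilation operators $\hat a$ (system) and $\hat b$ (auxiliary); Fock states $|n\rangle$. The beamsplitter unitary is $\hat B(\theta,\phi)=e^{\frac\theta2(\hat a^\dagger\hat b e^{i\phi}-\hat a\hat b^\dagger e^{-i\phi})}$, so $\hat B(2\epsilon,0)=e^{\epsilon(\hat a^\dagger\hat b-\hat a\hat b^\dagger)}$. Coherent state $|\alpha\rangle=e^{-|\alpha|^2/2}\sum_n\frac{\alpha^n}{\sqrt{n!}}|n\rangle$. A state has coherent rank $k$ if it is a superposition of $k$ (product) coherent states; its approximate coherent rank is the smallest $k$ such that for every $\delta>0$ there is a coherent rank $k$ state with fidelity (after normalization) greater than $1-\delta$ to it. *)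

theory Defs
  imports Complex_Main
begin

(* Single-mode states: Fock-basis coefficient sequences nat => complex
  (component n = amplitude of |n>). Two-mode states: nat => nat => complex,
  first argument = system mode a, second = auxiliary mode b. *)

definition coherent :: "complex \<Rightarrow> nat \<Rightarrow> complex" where
  "coherent \<alpha> n = exp (- complex_of_real ((cmod \<alpha>)\<^sup>2 / 2)) * \<alpha> ^ n / complex_of_real (sqrt (fact n))"

definition fock :: "nat \<Rightarrow> nat \<Rightarrow> complex" where
  "fock j n = (if n = j then 1 else 0)"

definition adag :: "(nat \<Rightarrow> complex) \<Rightarrow> nat \<Rightarrow> complex" where
  "adag \<psi> n = (if n = 0 then 0 else complex_of_real (sqrt (real n)) * \<psi> (n - 1))"

definition tensor :: "(nat \<Rightarrow> complex) \<Rightarrow> (nat \<Rightarrow> complex) \<Rightarrow> nat \<Rightarrow> nat \<Rightarrow> complex" where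
  "tensor \<psi> \<chi> n m = \<psi> n * \<chi> m"

(* Beamsplitter generator (\<theta>/2)(a^dag b e^{i\<phi>} - a b^dag e^{-i\<phi>}), acting on Fock coefficients. *)
definition bs_gen :: "real \<Rightarrow> real \<Rightarrow> (nat \<Rightarrow> nat \<Rightarrow> complex) \<Rightarrow> nat \<Rightarrow> nat \<Rightarrow> complex" where
  "bs_gen \<theta> \<phi> v n m = complex_of_real (\<theta> / 2) *
     (cis \<phi> * (if n = 0 then 0 else complex_of_real (sqrt (real n) * sqrt (real (m + 1))) * v (n - 1) (m + 1))
      - cis (- \<phi>) * (if m = 0 then 0 else complex_of_real (sqrt (real (n + 1)) * sqrt (real m)) * v (n + 1) (m - 1)))"

(* B(\<theta>,\<phi>) = exp(generator), as the exponential series applied componentwise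
  (the generator preserves total photon number, so each component is a series in a
  finite-dimensional block). *)
definition beamsplitter :: "real \<Rightarrow> real \<Rightarrow> (nat \<Rightarrow> nat \<Rightarrow> complex) \<Rightarrow> nat \<Rightarrow> nat \<Rightarrow> complex" where
  "beamsplitter \<theta> \<phi> v n m = (\<Sum>k. ((bs_gen \<theta> \<phi> ^^ k) v) n m / of_nat (fact k))"

definition proj_aux_vac :: "(nat \<Rightarrow> nat \<Rightarrow> complex) \<Rightarrow> nat \<Rightarrow> complex" where
  "proj_aux_vac v n = v n 0"

definition has_coherent_rank :: "nat \<Rightarrow> (nat \<Rightarrow> complex) \<Rightarrow> bool" where
  "has_coherent_rank k \<psi> \<longleftrightarrow>
     (\<exists>c \<alpha> :: nat \<Rightarrow> complex. \<psi> = (\<lambda>n. \<Sum>j<k. c j * coherent (\<alpha> j) n))"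

definition inner_l2 :: "(nat \<Rightarrow> complex) \<Rightarrow> (nat \<Rightarrow> complex) \<Rightarrow> complex" where
  "inner_l2 \<phi> \<chi> = (\<Sum>n. cnj (\<phi> n) * \<chi> n)"

definition normsq_l2 :: "(nat \<Rightarrow> complex) \<Rightarrow> real" where
  "normsq_l2 \<phi> = (\<Sum>n. (cmod (\<phi> n))\<^sup>2)"

definition fidelity :: "(nat \<Rightarrow> complex) \<Rightarrow> (nat \<Rightarrow> complex) \<Rightarrow> real" where
  "fidelity \<phi> \<chi> = (cmod (inner_l2 \<phi> \<chi>))\<^sup>2 / (normsq_l2 \<phi> * normsq_l2 \<chi>)"

definition approx_coherent_rank :: "(nat \<Rightarrow> complex) \<Rightarrow> nat" where
  "approx_coherent_rank \<phi> =
     (LEAST k. \<forall>\<delta>>0. \<exists>\<chi>. has_coherent_rank k \<chi> \<and> fidelity \<phi> \<chi> > 1 - \<delta>)"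

end

theory Submission
  imports Defs "HOL-Analysis.Analysis"
begin

(* Write G = a^dag b - a b^dag, so that B(2 eps, 0) = exp (eps G). The generator G preserves the
   total photon number N, moves one photon between the modes, and enlarges the amplitudes of the
   sector of total number N by at most a factor 2 (N + 1). Applied to |psi,1> and projected onto
   the auxiliary vacuum, the terms of order 0 and 2 of exp (eps G) vanish (after an even number of
   steps the auxiliary photon number is still odd) and the first-order term is eps a^dag psi. The
   remainder at |n> is the tail of an exponential series, at most
   (2 |eps| (n+1))^3 exp (2 |eps| (n+1)) |psi (n-1)|; after division by eps it is O(eps^2) in l^2,
   because the amplitudes of a superposition of coherent states are bounded by A R^n / sqrt (n!).

   On the unnormalised coherent vectors alpha^n / sqrt (n!) the creation operator acts as d/d alpha.
   Replacing the derivative by a difference quotient with step t exhibits a^dag psi as the limit, as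
   t -> 0, of superpositions of 2k coherent states; their amplitudes are dominated uniformly for
   |t| <= 1, so the fidelity tends to 1 by dominated convergence for series (Tannery's theorem). *)

lemma exp_sums_real: "(\<lambda>i. x ^ i / fact i) sums exp (x :: real)"
  using exp_converges[of x] by (simp add: divide_inverse mult.commute)

lemma power_le_fact_mult_exp:
  fixes x :: real
  assumes "0 \<le> x"
  shows "x ^ p \<le> fact p * exp x"
proof -
  have "(\<Sum>i\<in>{p}. x ^ i / fact i) \<le> (\<Sum>i. x ^ i / fact i)"
    using assms by (intro sum_le_suminf sums_summable[OF exp_sums_real]) auto
  then show ?thesis
    by (simp add: sums_unique[OF exp_sums_real, symmetric] field_simps)
qed

lemma norm_suminf_exp_tail_le:
  fixes a :: "nat \<Rightarrow> 'a :: banach" and x :: real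
  assumes a: "\<And>i. norm (a i) \<le> x ^ i / fact i * B" and x: "0 \<le> x"
  shows "norm (\<Sum>i. a (i + p)) \<le> x ^ p * exp x * B"
proof -
  have B: "0 \<le> B" using order.trans[OF norm_ge_zero a[of 0]] by simp
  have tail: "norm (a (i + p)) \<le> x ^ p * B * (x ^ i / fact i)" for i
  proof -
    have "norm (a (i + p)) \<le> x ^ (i + p) / fact (i + p) * B" by (rule a)
    also have "\<dots> \<le> x ^ (i + p) / fact i * B"
      using x B by (intro mult_right_mono divide_left_mono fact_mono) auto
    finally show ?thesis by (simp add: power_add mult_ac)
  qed
  have "norm (\<Sum>i. a (i + p)) \<le> (\<Sum>i. x ^ p * B * (x ^ i / fact i))"
    by (intro norm_suminf_le tail summable_mult sums_summable[OF exp_sums_real])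
  also have "\<dots> = x ^ p * B * (\<Sum>i. x ^ i / fact i)"
    by (rule suminf_mult[OF sums_summable[OF exp_sums_real]])
  also have "\<dots> = x ^ p * exp x * B"
    by (simp add: sums_unique[OF exp_sums_real, symmetric])
  finally show ?thesis .
qed

section \<open>Second-order expansion of the beamsplitter\<close>

lemma norm_bs_gen_le:
  assumes w: "\<And>n m. cmod (w n m) \<le> F (n + m)"
  shows "cmod (bs_gen \<theta> \<phi> w n m) \<le> \<bar>\<theta>\<bar> * (real (n + m) + 1) * F (n + m)"
proof -
  define N where "N = n + m"
  have hop: "cmod (complex_of_real (sqrt (real p) * sqrt (real q)) * w i j) \<le> (real N + 1) * F N"
    if "p \<le> N + 1" "q \<le> N + 1" "i + j = N" for p q i j
  proof -
    have "sqrt (real p) * sqrt (real q) \<le> sqrt (real N + 1) * sqrt (real N + 1)"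
      using that by (intro mult_mono) auto
    then show ?thesis
      using w[of i j] that by (auto simp: norm_mult intro!: mult_mono)
  qed
  define X where "X = (if n = 0 then 0 else complex_of_real (sqrt (real n) * sqrt (real (m + 1))) * w (n - 1) (m + 1))"
  define Y where "Y = (if m = 0 then 0 else complex_of_real (sqrt (real (n + 1)) * sqrt (real m)) * w (n + 1) (m - 1))"
  have F0: "0 \<le> F N" using order.trans[OF norm_ge_zero w[of n m]] by (simp add: N_def)
  have X: "cmod X \<le> (real N + 1) * F N"
    using F0 hop[of n "m + 1" "n - 1" "m + 1"] by (auto simp: X_def N_def)
  have Y: "cmod Y \<le> (real N + 1) * F N"
    using F0 hop[of "n + 1" m "n + 1" "m - 1"] by (auto simp: Y_def N_def)
  have "cmod (bs_gen \<theta> \<phi> w n m) = \<bar>\<theta>\<bar> / 2 * cmod (cis \<phi> * X - cis (- \<phi>) * Y)"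
    by (simp add: bs_gen_def X_def Y_def norm_mult)
  also have "\<dots> \<le> \<bar>\<theta>\<bar> / 2 * (cmod X + cmod Y)"
    by (intro mult_left_mono order_trans[OF norm_triangle_ineq4]) (auto simp: norm_mult)
  also have "\<dots> \<le> \<bar>\<theta>\<bar> / 2 * (2 * ((real N + 1) * F N))"
    using X Y by (intro mult_left_mono) auto
  finally show ?thesis by (simp add: N_def)
qed

lemma norm_bs_gen_power_le:
  assumes "\<And>n m. cmod (w n m) \<le> F (n + m)"
  shows "cmod ((bs_gen \<theta> \<phi> ^^ i) w n m) \<le> (\<bar>\<theta>\<bar> * (real (n + m) + 1)) ^ i * F (n + m)"
proof (induction i arbitrary: n m)
  case 0
  then show ?case using assms by simp
next
  case (Suc i)
  then show ?case
    using norm_bs_gen_le[where F = "\<lambda>N. (\<bar>\<theta>\<bar> * (real N + 1)) ^ i * F N" and \<theta> = \<theta> and \<phi> = \<phi>]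
    by (simp add: mult_ac)
qed

lemma bs_gen_single_photon_vac:
  "bs_gen \<theta> \<phi> (tensor \<psi> (fock 1)) n 0 = complex_of_real (\<theta> / 2) * cis \<phi> * adag \<psi> n"
  by (simp add: bs_gen_def tensor_def fock_def adag_def)

lemma bs_gen_twice_single_photon_vac:
  "bs_gen \<theta> \<phi> (bs_gen \<theta> \<phi> (tensor \<psi> (fock 1))) n 0 = 0"
  by (simp add: bs_gen_def tensor_def fock_def)

lemma beamsplitter_single_photon_remainder_le:
  "cmod (proj_aux_vac (beamsplitter \<theta> \<phi> (tensor \<psi> (fock 1))) n
           - complex_of_real (\<theta> / 2) * cis \<phi> * adag \<psi> n)
     \<le> (\<bar>\<theta>\<bar> * (real n + 1)) ^ 3 * exp (\<bar>\<theta>\<bar> * (real n + 1)) * cmod (\<psi> (n - 1))"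
proof -
  define x where "x = \<bar>\<theta>\<bar> * (real n + 1)"
  define a where "a = (\<lambda>i. (bs_gen \<theta> \<phi> ^^ i) (tensor \<psi> (fock 1)) n 0 / of_nat (fact i))"
  have "cmod (tensor \<psi> (fock 1) n' m) \<le> cmod (\<psi> (n' + m - 1))" for n' m
    by (simp add: tensor_def fock_def norm_mult)
  then have a: "norm (a i) \<le> x ^ i / fact i * cmod (\<psi> (n - 1))" for i
    using norm_bs_gen_power_le[where w = "tensor \<psi> (fock 1)" and F = "\<lambda>N. cmod (\<psi> (N - 1))"
      and \<theta> = \<theta> and \<phi> = \<phi> and i = i and n = n and m = 0]
    by (simp add: a_def x_def norm_divide divide_right_mono)
  have "summable a"
    by (rule summable_comparison_test'[OF summable_mult2[OF sums_summable[OF exp_sums_real]] a])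
  then have "suminf a = (\<Sum>i. a (i + 3)) + (\<Sum>i<3. a i)"
    by (rule suminf_split_initial_segment)
  also have "(\<Sum>i<3. a i) = a 0 + a 1 + a 2"
    by (simp add: numeral_3_eq_3 numeral_2_eq_2)
  also have "\<dots> = complex_of_real (\<theta> / 2) * cis \<phi> * adag \<psi> n"
    using bs_gen_single_photon_vac[of \<theta> \<phi> \<psi> n] bs_gen_twice_single_photon_vac[of \<theta> \<phi> \<psi> n]
    by (simp add: a_def tensor_def fock_def numeral_2_eq_2)
  finally have "proj_aux_vac (beamsplitter \<theta> \<phi> (tensor \<psi> (fock 1))) n
      - complex_of_real (\<theta> / 2) * cis \<phi> * adag \<psi> n = (\<Sum>i. a (i + 3))"
    by (simp add: proj_aux_vac_def beamsplitter_def a_def)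
  moreover have "norm (\<Sum>i. a (i + 3)) \<le> x ^ 3 * exp x * cmod (\<psi> (n - 1))"
    by (rule norm_suminf_exp_tail_le[OF a]) (simp add: x_def)
  ultimately show ?thesis by (simp add: x_def)
qed

lemma beamsplitter_adag_error_le:
  assumes "\<epsilon> \<noteq> 0" "\<bar>\<epsilon>\<bar> \<le> 1"
  shows "cmod (adag \<psi> n - proj_aux_vac (beamsplitter (2 * \<epsilon>) 0 (tensor \<psi> (fock 1))) n / complex_of_real \<epsilon>)
     \<le> \<epsilon>\<^sup>2 * ((2 * (real n + 1)) ^ 3 * exp (2 * (real n + 1)) * cmod (\<psi> (n - 1)))"
proof -
  define P where "P = proj_aux_vac (beamsplitter (2 * \<epsilon>) 0 (tensor \<psi> (fock 1))) n"
  define y where "y = 2 * (real n + 1)"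
  have "cmod (P - complex_of_real \<epsilon> * adag \<psi> n) \<le> (\<bar>\<epsilon>\<bar> * y) ^ 3 * exp (\<bar>\<epsilon>\<bar> * y) * cmod (\<psi> (n - 1))"
    using beamsplitter_single_photon_remainder_le[of "2 * \<epsilon>" 0 \<psi> n]
    by (simp add: P_def y_def abs_mult mult_ac)
  also have "\<dots> \<le> (\<bar>\<epsilon>\<bar> * y) ^ 3 * exp y * cmod (\<psi> (n - 1))"
    using assms by (intro mult_left_mono mult_right_mono) (auto simp: y_def mult_left_le_one_le)
  finally have rem: "cmod (P - complex_of_real \<epsilon> * adag \<psi> n)
      \<le> (\<bar>\<epsilon>\<bar> * y) ^ 3 * exp y * cmod (\<psi> (n - 1))" .
  have "adag \<psi> n - P / complex_of_real \<epsilon> = - (P - complex_of_real \<epsilon> * adag \<psi> n) / complex_of_real \<epsilon>"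
    using assms(1) by (simp add: field_simps)
  then have "cmod (adag \<psi> n - P / complex_of_real \<epsilon>) = cmod (P - complex_of_real \<epsilon> * adag \<psi> n) / \<bar>\<epsilon>\<bar>"
    by (simp add: norm_divide norm_minus_commute)
  also have "\<dots> \<le> (\<bar>\<epsilon>\<bar> * y) ^ 3 * exp y * cmod (\<psi> (n - 1)) / \<bar>\<epsilon>\<bar>"
    by (rule divide_right_mono[OF rem]) simp
  also have "\<dots> = \<epsilon>\<^sup>2 * (y ^ 3 * exp y * cmod (\<psi> (n - 1)))"
    using assms(1) by (simp add: power3_eq_cube power2_eq_square)
  finally show ?thesis by (simp add: P_def y_def)
qed

section \<open>Decay of coherent superpositions\<close>

lemma norm_coherent_le: "cmod (coherent \<alpha> n) \<le> cmod \<alpha> ^ n / sqrt (fact n)"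
proof -
  have "cmod (coherent \<alpha> n) = exp (- ((cmod \<alpha>)\<^sup>2 / 2)) * (cmod \<alpha> ^ n / sqrt (fact n))"
    unfolding coherent_def by (simp add: norm_mult norm_divide norm_power norm_exp_eq_Re)
  also have "\<dots> \<le> cmod \<alpha> ^ n / sqrt (fact n)"
    by (intro mult_left_le_one_le) auto
  finally show ?thesis .
qed

lemma norm_coherent_sum_le:
  fixes k :: nat
  shows "cmod (\<Sum>j<k. c j * coherent (a j) n)
     \<le> (\<Sum>j<k. cmod (c j)) * (\<Sum>j<k. cmod (a j)) ^ n / sqrt (fact n)"
proof -
  define S where "S = (\<Sum>j<k. cmod (a j))"
  have "cmod (\<Sum>j<k. c j * coherent (a j) n) \<le> (\<Sum>j<k. cmod (c j * coherent (a j) n))"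
    by (rule norm_sum)
  also have "\<dots> \<le> (\<Sum>j<k. cmod (c j) * (S ^ n / sqrt (fact n)))"
  proof (rule sum_mono)
    fix j assume "j \<in> {..<k}"
    then have "cmod (a j) \<le> S"
      using member_le_sum[of j "{..<k}" "\<lambda>j. cmod (a j)"] by (simp add: S_def)
    then have "cmod (a j) ^ n / sqrt (fact n) \<le> S ^ n / sqrt (fact n)"
      by (simp add: divide_right_mono power_mono)
    then have "cmod (coherent (a j) n) \<le> S ^ n / sqrt (fact n)"
      using norm_coherent_le order_trans by blast
    then show "cmod (c j * coherent (a j) n) \<le> cmod (c j) * (S ^ n / sqrt (fact n))"
      unfolding norm_mult by (rule mult_left_mono) simp
  qed
  finally show ?thesis by (simp add: S_def sum_distrib_right sum_divide_distrib)
qed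

lemma summable_gaussian_sq:
  fixes K A R :: real
  shows "summable (\<lambda>n. K ^ n * (A * R ^ n / sqrt (fact n))\<^sup>2)"
proof -
  have "K ^ n * (A * R ^ n / sqrt (fact n))\<^sup>2 = A\<^sup>2 * (inverse (fact n) * (K * R\<^sup>2) ^ n)" for n
    by (simp add: field_simps flip: power_mult)
  then show ?thesis
    by (simp add: summable_mult summable_exp)
qed

lemma summable_adag_error_weight:
  assumes \<psi>: "\<And>n. cmod (\<psi> n) \<le> A * R ^ n / sqrt (fact n)"
  shows "summable (\<lambda>n. ((2 * (real n + 1)) ^ 3 * exp (2 * (real n + 1)) * cmod (\<psi> (n - 1)))\<^sup>2)"
proof -
  define E :: real where "E = exp 4"
  have "norm (((2 * (real (Suc n) + 1)) ^ 3 * exp (2 * (real (Suc n) + 1)) * cmod (\<psi> n))\<^sup>2)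
      \<le> 36 * E ^ 4 * ((E ^ 2) ^ n * (A * R ^ n / sqrt (fact n))\<^sup>2)" for n
  proof -
    define x where "x = 2 * (real (Suc n) + 1)"
    have "x ^ 3 \<le> 6 * exp x"
      using power_le_fact_mult_exp[of x 3] by (simp add: x_def fact_numeral)
    then have "x ^ 3 * exp x * cmod (\<psi> n) \<le> 6 * exp x * exp x * (A * R ^ n / sqrt (fact n))"
      using \<psi>[of n] by (intro mult_mono) (auto simp: x_def)
    also have "6 * exp x * exp x = 6 * E ^ 2 * E ^ n"
      by (simp add: x_def E_def flip: exp_add exp_of_nat_mult power_add)
    finally have "(x ^ 3 * exp x * cmod (\<psi> n))\<^sup>2 \<le> (6 * E ^ 2 * E ^ n * (A * R ^ n / sqrt (fact n)))\<^sup>2"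
      by (intro power_mono) (auto simp: x_def)
    also have "\<dots> = 36 * E ^ 4 * ((E ^ 2) ^ n * (A * R ^ n / sqrt (fact n))\<^sup>2)"
      by (simp only: power_mult_distrib flip: power_mult) (simp add: mult_ac)
    finally show ?thesis by (simp add: x_def)
  qed
  then have "summable (\<lambda>n. ((2 * (real (Suc n) + 1)) ^ 3 * exp (2 * (real (Suc n) + 1)) * cmod (\<psi> (Suc n - 1)))\<^sup>2)"
    by (intro summable_comparison_test'[OF summable_mult[OF summable_gaussian_sq]]) auto
  then show ?thesis by (rule summable_Suc_iff[THEN iffD1])
qed

lemma l2_norm_le_of_pointwise_le:
  assumes d: "\<And>n. cmod (d n) \<le> c * g n" and g: "summable (\<lambda>n. (g n)\<^sup>2)" and c: "0 \<le> c"
  shows "summable (\<lambda>n. (cmod (d n))\<^sup>2) \<and> sqrt (normsq_l2 d) \<le> c * sqrt (\<Sum>n. (g n)\<^sup>2)"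
proof
  have sq: "(cmod (d n))\<^sup>2 \<le> c\<^sup>2 * (g n)\<^sup>2" for n
    using power_mono[OF d[of n], of 2] by (simp add: power_mult_distrib)
  have cg: "summable (\<lambda>n. c\<^sup>2 * (g n)\<^sup>2)" by (rule summable_mult[OF g])
  show sd: "summable (\<lambda>n. (cmod (d n))\<^sup>2)"
    by (rule summable_comparison_test'[OF cg]) (simp add: sq)
  have "normsq_l2 d \<le> (\<Sum>n. c\<^sup>2 * (g n)\<^sup>2)"
    unfolding normsq_l2_def by (rule suminf_le[OF sq sd cg])
  also have "\<dots> = c\<^sup>2 * (\<Sum>n. (g n)\<^sup>2)" by (rule suminf_mult[OF g])
  finally have "sqrt (normsq_l2 d) \<le> sqrt (c\<^sup>2 * (\<Sum>n. (g n)\<^sup>2))"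
    by (rule real_sqrt_le_mono)
  then show "sqrt (normsq_l2 d) \<le> c * sqrt (\<Sum>n. (g n)\<^sup>2)"
    using c by (simp add: real_sqrt_mult)
qed

lemma beamsplitter_adag_error:
  assumes rank: "has_coherent_rank k \<psi>"
  shows "\<exists>C \<delta>. \<delta> > 0 \<and>
           (\<forall>\<epsilon>::real. \<epsilon> \<noteq> 0 \<and> \<bar>\<epsilon>\<bar> < \<delta> \<longrightarrow>
              (let d = (\<lambda>n. adag \<psi> n
                   - proj_aux_vac (beamsplitter (2 * \<epsilon>) 0 (tensor \<psi> (fock 1))) n / complex_of_real \<epsilon>)
               in summable (\<lambda>n. (cmod (d n))\<^sup>2) \<and> sqrt (normsq_l2 d) \<le> C * \<epsilon>\<^sup>2))"
proof -
  obtain c a where \<psi>: "\<psi> = (\<lambda>n. \<Sum>j<k. c j * coherent (a j) n)"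
    using rank unfolding has_coherent_rank_def by blast
  define g where "g = (\<lambda>n. (2 * (real n + 1)) ^ 3 * exp (2 * (real n + 1)) * cmod (\<psi> (n - 1)))"
  have g: "summable (\<lambda>n. (g n)\<^sup>2)"
    unfolding g_def \<psi> by (rule summable_adag_error_weight[OF norm_coherent_sum_le])
  show ?thesis
  proof (rule exI[of _ "sqrt (\<Sum>n. (g n)\<^sup>2)"], rule exI[of _ 1], intro conjI allI impI)
    fix \<epsilon> :: real assume \<epsilon>: "\<epsilon> \<noteq> 0 \<and> \<bar>\<epsilon>\<bar> < 1"
    define d where "d = (\<lambda>n. adag \<psi> n
      - proj_aux_vac (beamsplitter (2 * \<epsilon>) 0 (tensor \<psi> (fock 1))) n / complex_of_real \<epsilon>)"
    have "cmod (d n) \<le> \<epsilon>\<^sup>2 * g n" for n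
      unfolding d_def g_def using \<epsilon> by (intro beamsplitter_adag_error_le) auto
    then have "summable (\<lambda>n. (cmod (d n))\<^sup>2) \<and> sqrt (normsq_l2 d) \<le> \<epsilon>\<^sup>2 * sqrt (\<Sum>n. (g n)\<^sup>2)"
      by (rule l2_norm_le_of_pointwise_le[OF _ g]) simp
    then show "let d = (\<lambda>n. adag \<psi> n
                   - proj_aux_vac (beamsplitter (2 * \<epsilon>) 0 (tensor \<psi> (fock 1))) n / complex_of_real \<epsilon>)
               in summable (\<lambda>n. (cmod (d n))\<^sup>2) \<and> sqrt (normsq_l2 d) \<le> sqrt (\<Sum>n. (g n)\<^sup>2) * \<epsilon>\<^sup>2"
      unfolding d_def Let_def by (simp add: mult.commute)
  qed simp
qed

section \<open>Approximate coherent rank\<close>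

lemma has_coherent_rank_add:
  assumes "has_coherent_rank k \<phi>" "has_coherent_rank m \<eta>"
  shows "has_coherent_rank (k + m) (\<lambda>n. \<phi> n + \<eta> n)"
proof -
  obtain c \<alpha> d \<beta> where \<phi>: "\<phi> = (\<lambda>n. \<Sum>j<k. c j * coherent (\<alpha> j) n)"
    and \<eta>: "\<eta> = (\<lambda>n. \<Sum>j<m. d j * coherent (\<beta> j) n)"
    using assms unfolding has_coherent_rank_def by blast
  define h where "h = (\<lambda>n j. (if j < k then c j else d (j - k))
                             * coherent (if j < k then \<alpha> j else \<beta> (j - k)) n)"
  have split: "(\<Sum>j<k + m'. h n j) = (\<Sum>j<k. h n j) + (\<Sum>j<m'. h n (k + j))" for n m'
    by (induction m') (simp_all add: add_ac)
  have "\<phi> n + \<eta> n = (\<Sum>j<k + m. h n j)" for n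
    unfolding split \<phi> \<eta> by (auto simp: h_def intro!: sum.cong)
  then show ?thesis
    unfolding has_coherent_rank_def h_def
    by (intro exI[of _ "\<lambda>j. if j < k then c j else d (j - k)"]
        exI[of _ "\<lambda>j. if j < k then \<alpha> j else \<beta> (j - k)"]) auto
qed

definition power_diff_quotient :: "complex \<Rightarrow> complex \<Rightarrow> nat \<Rightarrow> complex" where
  "power_diff_quotient a t n = (\<Sum>i<n. (a + t) ^ i * a ^ (n - Suc i))"

lemma power_diff_quotient_eq: "t * power_diff_quotient a t n = (a + t) ^ n - a ^ n"
  using power_diff_sumr2[of "a + t" n a] unfolding power_diff_quotient_def by (simp add: mult_ac)

lemma power_diff_quotient_0: "power_diff_quotient a 0 n = of_nat n * a ^ (n - 1)"
proof -
  have "power_diff_quotient a 0 n = (\<Sum>i<n. a ^ (n - 1))"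
    unfolding power_diff_quotient_def by (intro sum.cong refl) (simp flip: power_add)
  then show ?thesis by simp
qed

lemma norm_power_diff_quotient_le:
  assumes "cmod a \<le> R" "cmod (a + t) \<le> R" "1 \<le> R"
  shows "cmod (power_diff_quotient a t n) \<le> real n * R ^ n"
proof -
  have "cmod (power_diff_quotient a t n) \<le> (\<Sum>i<n. cmod ((a + t) ^ i * a ^ (n - Suc i)))"
    unfolding power_diff_quotient_def by (rule norm_sum)
  also have "\<dots> \<le> (\<Sum>i<n. R ^ n)"
  proof (rule sum_mono)
    fix i assume i: "i \<in> {..<n}"
    have "cmod ((a + t) ^ i * a ^ (n - Suc i)) \<le> R ^ i * R ^ (n - Suc i)"
      unfolding norm_mult norm_power using assms by (intro mult_mono power_mono) auto
    also have "\<dots> \<le> R ^ n"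
      using i assms(3) by (auto simp flip: power_add intro: power_increasing)
    finally show "cmod ((a + t) ^ i * a ^ (n - Suc i)) \<le> R ^ n" .
  qed
  finally show ?thesis by simp
qed

definition coherent_diff_quotient ::
    "(nat \<Rightarrow> complex) \<Rightarrow> (nat \<Rightarrow> complex) \<Rightarrow> nat \<Rightarrow> complex \<Rightarrow> nat \<Rightarrow> complex" where
  "coherent_diff_quotient c a k t n =
     (\<Sum>j<k. c j * exp (- complex_of_real ((cmod (a j))\<^sup>2 / 2)) * power_diff_quotient (a j) t n
            / complex_of_real (sqrt (fact n)))"

lemma coherent_diff_quotient_0:
  "coherent_diff_quotient c a k 0 = adag (\<lambda>n. \<Sum>j<k. c j * coherent (a j) n)"
proof
  fix n
  show "coherent_diff_quotient c a k 0 n = adag (\<lambda>n. \<Sum>j<k. c j * coherent (a j) n) n"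
  proof (cases n)
    case 0
    then show ?thesis by (simp add: coherent_diff_quotient_def adag_def power_diff_quotient_def)
  next
    case (Suc m)
    have "sqrt (real (Suc m)) / sqrt (fact m) = real (Suc m) / sqrt (fact (Suc m))"
      by (simp add: real_sqrt_mult field_simps del: of_nat_Suc)
    then have r: "complex_of_real (sqrt (real (Suc m))) / complex_of_real (sqrt (fact m))
           = of_nat (Suc m) / complex_of_real (sqrt (fact (Suc m)))"
      by (metis of_real_divide of_real_of_nat_eq)
    have "adag (\<lambda>n. \<Sum>j<k. c j * coherent (a j) n) n
        = (\<Sum>j<k. c j * exp (- complex_of_real ((cmod (a j))\<^sup>2 / 2)) * a j ^ m
              * (complex_of_real (sqrt (real (Suc m))) / complex_of_real (sqrt (fact m))))"
      by (simp add: Suc adag_def coherent_def sum_distrib_left mult_ac del: of_nat_Suc)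
    also have "\<dots> = coherent_diff_quotient c a k 0 n"
      unfolding r
      by (simp add: Suc coherent_diff_quotient_def power_diff_quotient_0 mult_ac del: of_nat_Suc)
    finally show ?thesis ..
  qed
qed

lemma has_coherent_rank_coherent_diff_quotient:
  fixes k :: nat
  assumes t: "t \<noteq> 0"
  shows "has_coherent_rank (2 * k) (coherent_diff_quotient c a k t)"
proof -
  define E where "E = (\<lambda>z. exp (- complex_of_real ((cmod z)\<^sup>2 / 2)))"
  define c' where "c' = (\<lambda>j. c j * E (a j) / (t * E (a j + t)))"
  have coh: "coherent z n = E z * z ^ n / complex_of_real (sqrt (fact n))" for z n
    by (simp add: coherent_def E_def)
  have "coherent_diff_quotient c a k t
      = (\<lambda>n. (\<Sum>j<k. c' j * coherent (a j + t) n) + (\<Sum>j<k. - c j / t * coherent (a j) n))"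
    unfolding sum.distrib[symmetric] coherent_diff_quotient_def
  proof (intro ext sum.cong[OF refl])
    fix j n
    have q: "power_diff_quotient (a j) t n = ((a j + t) ^ n - a j ^ n) / t"
      using power_diff_quotient_eq[of t "a j" n] t by (simp add: field_simps)
    have e: "exp (- complex_of_real ((cmod (a j))\<^sup>2 / 2)) = E (a j)" by (simp add: E_def)
    have "E (a j + t) \<noteq> 0" by (simp add: E_def)
    then show "c j * exp (- complex_of_real ((cmod (a j))\<^sup>2 / 2)) * power_diff_quotient (a j) t n
          / complex_of_real (sqrt (fact n))
        = c' j * coherent (a j + t) n + - c j / t * coherent (a j) n"
      unfolding q e using t by (simp add: c'_def coh field_simps)
  qed
  moreover have "has_coherent_rank (k + k) \<dots>"
  proof (rule has_coherent_rank_add)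
    show "has_coherent_rank k (\<lambda>n. \<Sum>j<k. c' j * coherent (a j + t) n)"
      unfolding has_coherent_rank_def by (intro exI[of _ c'] exI[of _ "\<lambda>j. a j + t"]) simp
    show "has_coherent_rank k (\<lambda>n. \<Sum>j<k. - c j / t * coherent (a j) n)"
      unfolding has_coherent_rank_def by (intro exI[of _ "\<lambda>j. - c j / t"] exI[of _ a]) simp
  qed
  ultimately show ?thesis by (simp add: mult_2)
qed

lemma norm_coherent_diff_quotient_le:
  fixes k :: nat
  assumes t: "cmod t \<le> 1"
  shows "cmod (coherent_diff_quotient c a k t n)
     \<le> (\<Sum>j<k. cmod (c j)) * (2 * (1 + (\<Sum>j<k. cmod (a j)))) ^ n / sqrt (fact n)"
proof -
  define R where "R = 1 + (\<Sum>j<k. cmod (a j))"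
  have R: "1 \<le> R" by (simp add: R_def sum_nonneg)
  have "cmod (coherent_diff_quotient c a k t n) \<le> (\<Sum>j<k. cmod (c j) * ((2 * R) ^ n / sqrt (fact n)))"
    unfolding coherent_diff_quotient_def
  proof (rule order_trans[OF norm_sum sum_mono])
    fix j assume "j \<in> {..<k}"
    then have aj: "cmod (a j) + 1 \<le> R"
      using member_le_sum[of j "{..<k}" "\<lambda>j. cmod (a j)"] by (simp add: R_def)
    have "cmod (power_diff_quotient (a j) t n) \<le> real n * R ^ n"
      using aj t norm_triangle_ineq[of "a j" t] by (intro norm_power_diff_quotient_le R) auto
    also have "\<dots> \<le> (2 * R) ^ n"
      unfolding power_mult_distrib using R by (intro mult_right_mono less_imp_le[OF of_nat_less_two_power]) auto
    finally have "cmod (power_diff_quotient (a j) t n) \<le> (2 * R) ^ n" .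
    moreover have "cmod (exp (- complex_of_real ((cmod (a j))\<^sup>2 / 2)) * power_diff_quotient (a j) t n)
        \<le> cmod (power_diff_quotient (a j) t n)"
      by (simp add: norm_mult norm_exp_eq_Re mult_left_le_one_le)
    ultimately have "cmod (exp (- complex_of_real ((cmod (a j))\<^sup>2 / 2)) * power_diff_quotient (a j) t n)
        \<le> (2 * R) ^ n"
      by linarith
    then show "cmod (c j * exp (- complex_of_real ((cmod (a j))\<^sup>2 / 2)) * power_diff_quotient (a j) t n
          / complex_of_real (sqrt (fact n))) \<le> cmod (c j) * ((2 * R) ^ n / sqrt (fact n))"
      by (simp add: norm_mult norm_divide mult.assoc divide_right_mono mult_left_mono)
  qed
  then show ?thesis by (simp add: R_def sum_distrib_right sum_divide_distrib)
qed

lemma coherent_diff_quotient_tendsto: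
  "((\<lambda>t. coherent_diff_quotient c a k t n) \<longlongrightarrow> coherent_diff_quotient c a k 0 n) (at 0)"
proof -
  have "isCont (\<lambda>t. coherent_diff_quotient c a k t n) 0"
    unfolding coherent_diff_quotient_def power_diff_quotient_def by (intro continuous_intros) simp
  then show ?thesis by (rule isContD)
qed

lemma normsq_l2_pos:
  assumes "summable (\<lambda>n. (cmod (\<phi> n))\<^sup>2)" and "\<phi> \<noteq> (\<lambda>_. 0)"
  shows "0 < normsq_l2 \<phi>"
proof -
  obtain m where "\<phi> m \<noteq> 0" using assms(2) by auto
  then show ?thesis
    unfolding normsq_l2_def by (intro suminf_pos2[OF assms(1), of m]) auto
qed

lemma inner_l2_self:
  assumes "summable (\<lambda>n. (cmod (\<phi> n))\<^sup>2)"
  shows "inner_l2 \<phi> \<phi> = complex_of_real (normsq_l2 \<phi>)"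
proof -
  have "inner_l2 \<phi> \<phi> = (\<Sum>n. complex_of_real ((cmod (\<phi> n))\<^sup>2))"
    unfolding inner_l2_def
    by (intro suminf_cong) (simp add: complex_norm_square mult.commute del: of_real_power)
  also have "\<dots> = complex_of_real (normsq_l2 \<phi>)"
    unfolding normsq_l2_def by (rule suminf_of_real[OF assms, symmetric])
  finally show ?thesis .
qed

lemma suminf_tendsto_dominated:
  fixes g :: "'a \<Rightarrow> nat \<Rightarrow> 'b :: {real_normed_algebra, banach}"
  assumes "\<And>n. ((\<lambda>t. g t n) \<longlongrightarrow> l n) F"
    and bound: "eventually (\<lambda>t. \<forall>n. norm (g t n) \<le> M n) F"
    and "summable M" and "F \<noteq> bot"
  shows "((\<lambda>t. \<Sum>n. g t n) \<longlongrightarrow> (\<Sum>n. l n)) F"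
proof (rule tannerys_theorem[THEN conjunct2, THEN conjunct2])
  have "eventually (\<lambda>(m :: nat, t). \<forall>n. norm (g t n) \<le> M n) (at_top \<times>\<^sub>F F)"
    using bound by (subst eventually_prod2) simp_all
  then show "eventually (\<lambda>(n, t). norm (g t n) \<le> M n) (at_top \<times>\<^sub>F F)"
    by (rule eventually_mono) auto
qed (use assms in auto)

lemma fidelity_tendsto_1:
  fixes f :: "'a \<Rightarrow> nat \<Rightarrow> complex" and b :: "nat \<Rightarrow> real"
  assumes lim: "\<And>n. ((\<lambda>t. f t n) \<longlongrightarrow> \<phi> n) F"
    and bound: "eventually (\<lambda>t. \<forall>n. cmod (f t n) \<le> b n) F"
    and b: "summable (\<lambda>n. (b n)\<^sup>2)"
    and nonzero: "\<phi> \<noteq> (\<lambda>_. 0)" and F: "F \<noteq> bot"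
  shows "((\<lambda>t. fidelity \<phi> (f t)) \<longlongrightarrow> 1) F"
proof -
  have \<phi>_le: "cmod (\<phi> n) \<le> b n" for n
  proof (rule tendsto_upperbound[OF tendsto_norm[OF lim]])
    show "eventually (\<lambda>t. cmod (f t n) \<le> b n) F"
      using bound by (rule eventually_mono) auto
  qed (simp add: F)
  have sq: "summable (\<lambda>n. (cmod (\<phi> n))\<^sup>2)"
    by (rule summable_comparison_test'[OF b]) (simp add: \<phi>_le power_mono)
  have "((\<lambda>t. \<Sum>n. cnj (\<phi> n) * f t n) \<longlongrightarrow> (\<Sum>n. cnj (\<phi> n) * \<phi> n)) F"
  proof (rule suminf_tendsto_dominated[OF _ _ b F])
    show "eventually (\<lambda>t. \<forall>n. norm (cnj (\<phi> n) * f t n) \<le> (b n)\<^sup>2) F"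
      using bound by (rule eventually_mono)
        (auto simp: norm_mult power2_eq_square \<phi>_le intro: mult_mono')
  qed (intro tendsto_intros lim)
  then have inner: "((\<lambda>t. inner_l2 \<phi> (f t)) \<longlongrightarrow> complex_of_real (normsq_l2 \<phi>)) F"
    using inner_l2_self[OF sq] unfolding inner_l2_def by simp
  have "((\<lambda>t. \<Sum>n. (cmod (f t n))\<^sup>2) \<longlongrightarrow> (\<Sum>n. (cmod (\<phi> n))\<^sup>2)) F"
  proof (rule suminf_tendsto_dominated[OF _ _ b F])
    show "eventually (\<lambda>t. \<forall>n. norm ((cmod (f t n))\<^sup>2) \<le> (b n)\<^sup>2) F"
      using bound by (rule eventually_mono) (simp add: power_mono)
  qed (intro tendsto_intros lim)
  then have norm: "((\<lambda>t. normsq_l2 (f t)) \<longlongrightarrow> normsq_l2 \<phi>) F"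
    unfolding normsq_l2_def .
  have pos: "0 < normsq_l2 \<phi>" by (rule normsq_l2_pos[OF sq nonzero])
  have "((\<lambda>t. (cmod (inner_l2 \<phi> (f t)))\<^sup>2 / (normsq_l2 \<phi> * normsq_l2 (f t)))
        \<longlongrightarrow> (cmod (complex_of_real (normsq_l2 \<phi>)))\<^sup>2 / (normsq_l2 \<phi> * normsq_l2 \<phi>)) F"
    using pos by (intro tendsto_intros inner norm) auto
  then show ?thesis
    using pos by (simp add: fidelity_def power2_eq_square)
qed

lemma approx_coherent_rank_le:
  assumes "((\<lambda>t. fidelity \<phi> (f t)) \<longlongrightarrow> 1) F" and "F \<noteq> bot"
    and "eventually (\<lambda>t. has_coherent_rank k (f t)) F"
  shows "approx_coherent_rank \<phi> \<le> k"
proof -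
  have "\<exists>\<eta>. has_coherent_rank k \<eta> \<and> fidelity \<phi> \<eta> > 1 - \<delta>" if "\<delta> > 0" for \<delta> :: real
  proof -
    have "eventually (\<lambda>t. 1 - \<delta> < fidelity \<phi> (f t)) F"
      using that by (intro order_tendstoD(1)[OF assms(1)]) simp
    with assms(3) have "eventually (\<lambda>t. has_coherent_rank k (f t) \<and> 1 - \<delta> < fidelity \<phi> (f t)) F"
      by (rule eventually_conj)
    then show ?thesis using eventually_happens'[OF assms(2)] by blast
  qed
  then show ?thesis
    unfolding approx_coherent_rank_def by (intro Least_le) blast
qed

lemma approx_coherent_rank_adag_le:
  assumes rank: "has_coherent_rank k \<psi>" and nonzero: "\<psi> \<noteq> (\<lambda>_. 0)"
  shows "approx_coherent_rank (adag \<psi>) \<le> 2 * k"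
proof -
  obtain c a where \<psi>: "\<psi> = (\<lambda>n. \<Sum>j<k. c j * coherent (a j) n)"
    using rank unfolding has_coherent_rank_def by blast
  define b where "b = (\<lambda>n. (\<Sum>j<k. cmod (c j)) * (2 * (1 + (\<Sum>j<k. cmod (a j)))) ^ n / sqrt (fact n))"
  have lim: "((\<lambda>t. coherent_diff_quotient c a k t n) \<longlongrightarrow> adag \<psi> n) (at 0)" for n
    using coherent_diff_quotient_tendsto by (simp add: \<psi> coherent_diff_quotient_0)
  have "eventually (\<lambda>t. cmod t < 1) (at (0 :: complex))"
    unfolding eventually_at by (intro exI[of _ 1]) (auto simp: dist_norm)
  then have bound: "eventually (\<lambda>t. \<forall>n. cmod (coherent_diff_quotient c a k t n) \<le> b n) (at 0)"
    unfolding b_def by (rule eventually_mono) (blast intro: norm_coherent_diff_quotient_le less_imp_le)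
  have "summable (\<lambda>n. (b n)\<^sup>2)"
    using summable_gaussian_sq[of 1] by (simp add: b_def)
  moreover obtain m where "\<psi> m \<noteq> 0" using nonzero by auto
  then have "adag \<psi> \<noteq> (\<lambda>_. 0)"
    by (auto simp: adag_def dest: fun_cong[of _ _ "Suc m"])
  ultimately have "((\<lambda>t. fidelity (adag \<psi>) (coherent_diff_quotient c a k t)) \<longlongrightarrow> 1) (at 0)"
    using lim bound by (intro fidelity_tendsto_1) auto
  moreover have "eventually (\<lambda>t. has_coherent_rank (2 * k) (coherent_diff_quotient c a k t)) (at 0)"
    by (auto simp: eventually_at_filter has_coherent_rank_coherent_diff_quotient)
  ultimately show ?thesis
    by (intro approx_coherent_rank_le) auto
qed

theorem proposition5:
  fixes \<psi> :: "nat \<Rightarrow> complex" and k :: nat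
  assumes rank: "has_coherent_rank k \<psi>"
    and state: "\<psi> \<noteq> (\<lambda>_. 0)"
  shows "(\<exists>C \<delta>. \<delta> > 0 \<and>
           (\<forall>\<epsilon>::real. \<epsilon> \<noteq> 0 \<and> \<bar>\<epsilon>\<bar> < \<delta> \<longrightarrow>
              (let d = (\<lambda>n. adag \<psi> n
                   - proj_aux_vac (beamsplitter (2 * \<epsilon>) 0 (tensor \<psi> (fock 1))) n / complex_of_real \<epsilon>)
               in summable (\<lambda>n. (cmod (d n))\<^sup>2) \<and> sqrt (normsq_l2 d) \<le> C * \<epsilon>\<^sup>2)))
         \<and> approx_coherent_rank (adag \<psi>) \<le> 2 * k"
  using beamsplitter_adag_error[OF rank] approx_coherent_rank_adag_le[OF rank state] by blast

end
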